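(* For the anonymous MIS algorithm described in the context, let $\mathcal{X}$ be an alive connected candidate set of a configuration $\gamma$, and let $t$ be a valid set of moves in $\gamma$ consisting only of Withdrawal? moves on nodes of $\mathcal{X}$. Let $\gamma'$ be the random configuration obtained by executing $t$ from $\gamma$. Then, conditioned on the event that $\mathcal{X}$ vanishes in the transition $\gamma\xrightarrow{t}\gamma'$ (assumed to have positive probability), the probability that $\beta(\gamma')\setminus\beta(\gamma)\neq\emptyset$ is at least $\frac23$.
   Context: $G=(V,E)$ is a finite simple undirected graph; $N(u)$ is the open neighbourhood of $u$. A configuration assigns to each node $u$ a value $s_u\in\{\bot,\top\}$ (written $s_u^\gamma$ in configuration $\gamma$). A rule "guard $\to$ command" is enabled on $u$ in $\gamma$ if its guard holds there. A set $t$ of moves $(u,r)$ is valid in $\gamma$ if it is nonempty, each $r$ is enabled on $u$ in $\gamma$, and no node appears in two moves; executing $t$ from $\gamma$ means all nodes of $t$ execute their commands simultaneously from the values in $\gamma$, with independent random choices, the other nodes keeping their values. The algorithm has the rules: (Candidacy) $s_u=\bot\wedge\forall v\in N(u),\ s_v=\bot\ \to\ s_u:=\top$. (Withdrawal?) $s_u=\top\wedge\exists v\in N(u),\ s_v=\top\ \to$ with probability $\frac12$ (independently) set $s_u:=\bot$, otherwise leave it unchanged. $\beta(\gamma)=\{u\in V: s_u^\gamma=\top\text{ and }\forall v\in N(u),\ s_v^\gamma=\bot\}$. A set $\mathcal{X}\subseteq V$ is a candidate set of $\gamma$ if every $u\in\mathcal{X}$ has $s_u^\gamma=\top$ and every $v\in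 N(u)$ with $s_v^\gamma=\top$ belongs to $\mathcal{X}$; it is a connected candidate set if moreover it induces a connected subgraph of $G$. A candidate set $\mathcal{X}$ of $\gamma$ is alive in $\gamma$ if Withdrawal? is enabled on at least one node of $\mathcal{X}$ (for connected candidate sets this is equivalent to $|\mathcal{X}|\ge 2$). In a transition $\gamma\to\gamma'$, an alive candidate set $\mathcal{X}$ of $\gamma$ vanishes if every $u\in\mathcal{X}$ satisfies $s_u^{\gamma'}=\bot$ or $u\in\beta(\gamma')$. *)

theory Defs
  imports "HOL-Probability.Probability"
begin

text \<open>A configuration is a function
  'a \<Rightarrow> bool, where True encodes top and False encodes bot.\<close>

definition simple_graph :: "'a set \<Rightarrow> ('a \<Rightarrow> 'a \<Rightarrow> bool) \<Rightarrow> bool" where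
  "simple_graph V E \<longleftrightarrow> finite V \<and> (\<forall>u v. E u v \<longrightarrow> u \<in> V \<and> v \<in> V)
     \<and> (\<forall>u v. E u v \<longrightarrow> E v u) \<and> (\<forall>u. \<not> E u u)"

definition nbrs :: "'a set \<Rightarrow> ('a \<Rightarrow> 'a \<Rightarrow> bool) \<Rightarrow> 'a \<Rightarrow> 'a set" where
  "nbrs V E u = {v \<in> V. E u v}"

definition withdrawal_enabled :: "'a set \<Rightarrow> ('a \<Rightarrow> 'a \<Rightarrow> bool) \<Rightarrow> ('a \<Rightarrow> bool) \<Rightarrow> 'a \<Rightarrow> bool" where
  "withdrawal_enabled V E \<gamma> u \<longleftrightarrow> \<gamma> u \<and> (\<exists>v \<in> nbrs V E u. \<gamma> v)"

definition beta :: "'a set \<Rightarrow> ('a \<Rightarrow> 'a \<Rightarrow> bool) \<Rightarrow> ('a \<Rightarrow> bool) \<Rightarrow> 'a set" where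
  "beta V E \<gamma> = {u \<in> V. \<gamma> u \<and> (\<forall>v \<in> nbrs V E u. \<not> \<gamma> v)}"

definition candidate_set :: "'a set \<Rightarrow> ('a \<Rightarrow> 'a \<Rightarrow> bool) \<Rightarrow> ('a \<Rightarrow> bool) \<Rightarrow> 'a set \<Rightarrow> bool" where
  "candidate_set V E \<gamma> X \<longleftrightarrow> X \<subseteq> V \<and>
     (\<forall>u \<in> X. \<gamma> u \<and> (\<forall>v \<in> nbrs V E u. \<gamma> v \<longrightarrow> v \<in> X))"

definition induces_connected :: "('a \<Rightarrow> 'a \<Rightarrow> bool) \<Rightarrow> 'a set \<Rightarrow> bool" where
  "induces_connected E X \<longleftrightarrow> X \<noteq> {} \<and>
     (\<forall>u \<in> X. \<forall>v \<in> X. (\<lambda>a b. a \<in> X \<and> b \<in> X \<and> E a b)\<^sup>*\<^sup>* u v)"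

definition connected_candidate_set :: "'a set \<Rightarrow> ('a \<Rightarrow> 'a \<Rightarrow> bool) \<Rightarrow> ('a \<Rightarrow> bool) \<Rightarrow> 'a set \<Rightarrow> bool" where
  "connected_candidate_set V E \<gamma> X \<longleftrightarrow> candidate_set V E \<gamma> X \<and> induces_connected E X"

definition alive :: "'a set \<Rightarrow> ('a \<Rightarrow> 'a \<Rightarrow> bool) \<Rightarrow> ('a \<Rightarrow> bool) \<Rightarrow> 'a set \<Rightarrow> bool" where
  "alive V E \<gamma> X \<longleftrightarrow> candidate_set V E \<gamma> X \<and> (\<exists>u \<in> X. withdrawal_enabled V E \<gamma> u)"

definition vanishes :: "'a set \<Rightarrow> ('a \<Rightarrow> 'a \<Rightarrow> bool) \<Rightarrow> ('a \<Rightarrow> bool) \<Rightarrow> 'a set \<Rightarrow> bool" where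
  "vanishes V E \<gamma>' X \<longleftrightarrow> (\<forall>u \<in> X. \<not> \<gamma>' u \<or> u \<in> beta V E \<gamma>')"

text \<open>A valid set of moves consisting only of Withdrawal? moves is identified with its
  (nonempty) set t of nodes, each of which has Withdrawal? enabled.  Executing it: every
  node of t independently with probability 1/2 sets its value to bot, otherwise keeps it.
  The outcome is determined by the set S \<subseteq> t of nodes that withdrew; S is uniformly
  distributed on Pow t (= product of independent fair coins).\<close>
definition valid_withdrawal_moves :: "'a set \<Rightarrow> ('a \<Rightarrow> 'a \<Rightarrow> bool) \<Rightarrow> ('a \<Rightarrow> bool) \<Rightarrow> 'a set \<Rightarrow> bool" where
  "valid_withdrawal_moves V E \<gamma> t \<longleftrightarrow> t \<noteq> {} \<and> t \<subseteq> V \<and> (\<forall>u \<in> t. withdrawal_enabled V E \<gamma> u)"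

definition exec_withdrawals :: "('a \<Rightarrow> bool) \<Rightarrow> 'a set \<Rightarrow> ('a \<Rightarrow> bool)" where
  "exec_withdrawals \<gamma> S = (\<lambda>u. if u \<in> S then False else \<gamma> u)"

definition step_distr :: "('a \<Rightarrow> bool) \<Rightarrow> 'a set \<Rightarrow> ('a \<Rightarrow> bool) pmf" where
  "step_distr \<gamma> t = map_pmf (exec_withdrawals \<gamma>) (pmf_of_set (Pow t))"

end

theory Submission
  imports Defs
begin

text \<open>An outcome of the step is the set S \<subseteq> t of nodes that withdraw. Since \<open>X\<close> has at least
  two nodes and is connected, no node of \<open>X\<close> is in \<open>\<beta>(\<gamma>)\<close>; so if \<open>X\<close> vanishes and some node
  of \<open>X\<close> keeps \<open>\<top>\<close>, that node is a new element of \<open>\<beta>(\<gamma>')\<close>. The only vanishing outcome that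
  can fail is therefore S = X (possible only when t = X). In that case, for each of the at
  least two nodes c of \<open>X\<close>, the outcome X - {c} makes \<open>X\<close> vanish with c isolated in \<open>\<beta>(\<gamma>')\<close>.
  Hence at most one of \<open>k + 1\<close> equally likely vanishing outcomes is bad, with \<open>k \<ge> 2\<close>.\<close>

lemma prob_step_distr:
  assumes "finite t"
  shows "measure_pmf.prob (step_distr \<gamma> t) {g. Q g}
           = card {S \<in> Pow t. Q (exec_withdrawals \<gamma> S)} / card (Pow t)"
proof -
  have "measure_pmf.prob (step_distr \<gamma> t) {g. Q g}
      = measure_pmf.prob (pmf_of_set (Pow t)) (exec_withdrawals \<gamma> -` {g. Q g})"
    by (simp add: step_distr_def)
  also have "\<dots> = card (Pow t \<inter> exec_withdrawals \<gamma> -` {g. Q g}) / card (Pow t)"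
    using assms by (subst measure_pmf_of_set) auto
  also have "Pow t \<inter> exec_withdrawals \<gamma> -` {g. Q g} = {S \<in> Pow t. Q (exec_withdrawals \<gamma> S)}"
    by auto
  finally show ?thesis .
qed

lemma card_le_three_halves:
  assumes "finite A" "B \<subseteq> insert x A" "x \<in> B - A \<Longrightarrow> 2 \<le> card A"
  shows "2 * card B \<le> 3 * card A"
proof (cases "x \<in> B - A")
  case True
  have "card B \<le> card (insert x A)"
    using assms(1,2) by (intro card_mono) auto
  also have "\<dots> = Suc (card A)"
    using assms(1) True by simp
  finally have "card B \<le> Suc (card A)" .
  moreover have "2 \<le> card A" using assms(3) True .
  ultimately show ?thesis by linarith
next
  case False
  then have "B \<subseteq> A" using assms(2) by blast
  then have "card B \<le> card A" using assms(1) by (rule card_mono[rotated])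
  then show ?thesis by linarith
qed

lemma alive_candidate_set_two_nodes:
  assumes "simple_graph V E" "alive V E \<gamma> X"
  obtains a b where "a \<in> X" "b \<in> X" "a \<noteq> b"
proof -
  obtain u v where "u \<in> X" "v \<in> V" "E u v" "\<gamma> v"
    using assms(2) unfolding alive_def withdrawal_enabled_def nbrs_def by blast
  moreover from this have "v \<in> X"
    using assms(2) unfolding alive_def candidate_set_def nbrs_def by blast
  moreover have "u \<noteq> v" using \<open>E u v\<close> assms(1) unfolding simple_graph_def by blast
  ultimately show ?thesis using that by blast
qed

lemma connected_candidate_set_not_beta:
  assumes "simple_graph V E" "connected_candidate_set V E \<gamma> X"
    and "u \<in> X" "w \<in> X" "u \<noteq> w"
  shows "u \<notin> beta V E \<gamma>"
proof -
  have "(\<lambda>a b. a \<in> X \<and> b \<in> X \<and> E a b)\<^sup>*\<^sup>* u w"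
    using assms(2-4) unfolding connected_candidate_set_def induces_connected_def by blast
  then obtain c where "c \<in> X" "E u c"
    using assms(5) by (cases rule: converse_rtranclpE) auto
  moreover have "\<gamma> c" "c \<in> V"
    using \<open>c \<in> X\<close> assms(2) unfolding connected_candidate_set_def candidate_set_def by auto
  ultimately show ?thesis unfolding beta_def nbrs_def by blast
qed

lemma vanishes_all_but_one_withdraw:
  assumes "simple_graph V E" "candidate_set V E \<gamma> X" "c \<in> X"
  shows "vanishes V E (exec_withdrawals \<gamma> (X - {c})) X"
proof -
  let ?g = "exec_withdrawals \<gamma> (X - {c})"
  have irrefl: "\<not> E c c" and closed: "\<And>v. v \<in> nbrs V E c \<Longrightarrow> \<gamma> v \<Longrightarrow> v \<in> X"
    using assms unfolding simple_graph_def candidate_set_def by blast+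
  have "\<not> ?g v" if "v \<in> nbrs V E c" for v
  proof -
    have "v \<noteq> c" using that irrefl unfolding nbrs_def by blast
    then show ?thesis using closed[OF that] unfolding exec_withdrawals_def by auto
  qed
  moreover have "?g c" "c \<in> V"
    using assms(2,3) unfolding candidate_set_def exec_withdrawals_def by auto
  ultimately have "c \<in> beta V E ?g"
    unfolding beta_def by blast
  then show ?thesis
    unfolding vanishes_def exec_withdrawals_def by auto
qed

lemma vanishes_survivor_new_beta:
  assumes "candidate_set V E \<gamma> X" "vanishes V E (exec_withdrawals \<gamma> S) X"
    and "u \<in> X" "u \<notin> S" "u \<notin> beta V E \<gamma>"
  shows "beta V E (exec_withdrawals \<gamma> S) - beta V E \<gamma> \<noteq> {}"
proof -
  have "exec_withdrawals \<gamma> S u"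
    using assms(1,3,4) unfolding candidate_set_def exec_withdrawals_def by simp
  then show ?thesis using assms(2,3,5) unfolding vanishes_def by blast
qed

lemma card_vanishing_outcomes_le:
  assumes "simple_graph V E" "connected_candidate_set V E \<gamma> X" "alive V E \<gamma> X"
    and "t \<subseteq> X" "finite t"
  shows "2 * card {S \<in> Pow t. vanishes V E (exec_withdrawals \<gamma> S) X}
         \<le> 3 * card {S \<in> Pow t. vanishes V E (exec_withdrawals \<gamma> S) X \<and>
                       beta V E (exec_withdrawals \<gamma> S) - beta V E \<gamma> \<noteq> {}}"
    (is "2 * card ?B \<le> 3 * card ?A")
proof -
  obtain a b where ab: "a \<in> X" "b \<in> X" "a \<noteq> b"
    using alive_candidate_set_two_nodes assms(1,3) by blast
  have cand: "candidate_set V E \<gamma> X"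
    using assms(2) unfolding connected_candidate_set_def by blast
  have not_beta: "u \<notin> beta V E \<gamma>" if "u \<in> X" for u
  proof (cases "u = a")
    case True
    then show ?thesis using connected_candidate_set_not_beta[OF assms(1,2) that ab(2)] ab(3) by blast
  next
    case False
    then show ?thesis using connected_candidate_set_not_beta[OF assms(1,2) that ab(1)] by blast
  qed
  have good: "S \<in> ?A" if "S \<in> ?B" "u \<in> X" "u \<notin> S" for S u
    using that vanishes_survivor_new_beta[OF cand _ that(2,3) not_beta[OF that(2)]] by simp
  have bad_covers: "X \<subseteq> S" if "S \<in> ?B" "S \<notin> ?A" for S
  proof
    fix u assume "u \<in> X"
    show "u \<in> S"
    proof (rule ccontr)
      assume "u \<notin> S"
      then show False using good[OF that(1) \<open>u \<in> X\<close>] that(2) by blast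
    qed
  qed
  have covered: "?B \<subseteq> insert t ?A"
  proof
    fix S assume "S \<in> ?B"
    then have "S \<subseteq> t" by simp
    then show "S \<in> insert t ?A" using bad_covers[OF \<open>S \<in> ?B\<close>] assms(4) by blast
  qed
  have many_good: "2 \<le> card ?A" if "t \<in> ?B - ?A"
  proof -
    have "t = X" using bad_covers that assms(4) by blast
    have "X - {c} \<in> ?A" if "c \<in> X" for c
    proof (rule good)
      show "X - {c} \<in> ?B"
        using vanishes_all_but_one_withdraw[OF assms(1) cand that] \<open>t = X\<close> by blast
    qed (use that in auto)
    then have "{X - {a}, X - {b}} \<subseteq> ?A" using ab by blast
    then have "card {X - {a}, X - {b}} \<le> card ?A"
      using assms(5) by (intro card_mono) auto
    moreover have "X - {a} \<noteq> X - {b}" using ab by blast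
    ultimately show ?thesis by simp
  qed
  have "finite ?A" using assms(5) by simp
  then show ?thesis using covered many_good by (rule card_le_three_halves)
qed

theorem mainTheorem15:
  fixes V :: "'a set" and E :: "'a \<Rightarrow> 'a \<Rightarrow> bool" and \<gamma> :: "'a \<Rightarrow> bool"
    and X t :: "'a set"
  assumes "simple_graph V E"
    and "connected_candidate_set V E \<gamma> X"
    and "alive V E \<gamma> X"
    and "valid_withdrawal_moves V E \<gamma> t"
    and "t \<subseteq> X"
    and "measure_pmf.prob (step_distr \<gamma> t) {\<gamma>'. vanishes V E \<gamma>' X} > 0"
  shows "measure_pmf.prob (step_distr \<gamma> t)
            {\<gamma>'. vanishes V E \<gamma>' X \<and> beta V E \<gamma>' - beta V E \<gamma> \<noteq> {}}
         / measure_pmf.prob (step_distr \<gamma> t) {\<gamma>'. vanishes V E \<gamma>' X} \<ge> 2 / 3"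
proof -
  have ft: "finite t"
    using assms(1,4) finite_subset unfolding simple_graph_def valid_withdrawal_moves_def by blast
  define B where "B = card {S \<in> Pow t. vanishes V E (exec_withdrawals \<gamma> S) X}"
  define A where "A = card {S \<in> Pow t. vanishes V E (exec_withdrawals \<gamma> S) X \<and>
                              beta V E (exec_withdrawals \<gamma> S) - beta V E \<gamma> \<noteq> {}}"
  have ratio: "measure_pmf.prob (step_distr \<gamma> t)
            {\<gamma>'. vanishes V E \<gamma>' X \<and> beta V E \<gamma>' - beta V E \<gamma> \<noteq> {}}
         / measure_pmf.prob (step_distr \<gamma> t) {\<gamma>'. vanishes V E \<gamma>' X} = A / B"
    unfolding prob_step_distr[OF ft] A_def B_def using ft by (simp add: card_Pow)
  have "B > 0"
    using assms(6) unfolding prob_step_distr[OF ft] B_def by (cases "B = 0") (auto simp: B_def)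
  moreover have "2 * B \<le> 3 * A"
    using card_vanishing_outcomes_le[OF assms(1-3,5) ft] unfolding A_def B_def .
  ultimately show ?thesis
    unfolding ratio by (simp add: field_simps)
qed

end
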